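(* Let $M,N\ge1$ be integers and let $f_0,\ldots,f_{K-1}$ be distinct functions $\mathbb{Z}_M\to\mathbb{Z}_N$. Define the $K\times K$ matrix $\Gamma$ by $\Gamma_{j'j}=\sum_{x\in\mathbb{Z}_M}\langle f_{j'}(x)|f_j(x)\rangle$, i.e. $\Gamma_{j'j}$ is the number of $x\in\mathbb{Z}_M$ with $f_{j'}(x)=f_j(x)$. Then the standard oracle operators $U_{f_0},\ldots,U_{f_{K-1}}$ are unambiguously distinguishable if and only if $\det\Gamma>0$. Moreover, when $M=N$ and all $f_j$ are permutations of $\mathbb{Z}_M$, the minimal oracle operators $Q_{f_0},\ldots,Q_{f_{K-1}}$ are unambiguously distinguishable if and only if $\det\Gamma>0$.
   Context: Let $\mathcal{H}_M,\mathcal{H}_N$ be Hilbert spaces with orthonormal computational bases $\{|x\rangle\}_{x\in\mathbb{Z}_M}$, $\{|y\rangle\}_{y\in\mathbb{Z}_N}$. For $f:\mathbb{Z}_M\to\mathbb{Z}_N$ the standard oracle operator is the unitary $U_f$ on $\mathcal{H}_M\otimes\mathcal{H}_N$ with $U_f|x\rangle\otimes|y\rangle=|x\rangle\otimes|y\oplus f(x)\rangle$, $\oplus$ being addition mod $N$. For a permutation $f$ of $\mathbb{Z}_M$, the minimal oracle operator is the unitary $Q_f$ on $\mathcal{H}_M$ with $Q_f|x\rangle=|f(x)\rangle$. A finite list of unitary operators $W_1,\ldots,W_K$ on a finite-dimensional Hilbert space $\mathcal{H}$ is called unambiguously distinguishable if there exist a finite-dimensional ancilla space $\mathcal{H}_A$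 and a unit vector $|\psi\rangle\in\mathcal{H}\otimes\mathcal{H}_A$ such that the vectors $(W_j\otimes\mathbb{1}_A)|\psi\rangle$ are linearly independent. *)

theory Defs
  imports Complex_Main "Jordan_Normal_Form.Determinant"
begin

text \<open>A d-dimensional Hilbert space is C^d with computational basis indexed by 0..<d;
  operators are d x d complex matrices. An ancilla of dimension m gives
  H (x) H_A = C^(d*m), basis vector |i> (x) |a> having index i*m + a.\<close>

definition tensor_id_apply :: "complex mat \<Rightarrow> nat \<Rightarrow> complex vec \<Rightarrow> complex vec" where
  "tensor_id_apply W m \<psi> =
     vec (dim_row W * m) (\<lambda>p. \<Sum>k<dim_col W. W $$ (p div m, k) * \<psi> $ (k * m + p mod m))"

definition unit_vec_in :: "nat \<Rightarrow> complex vec \<Rightarrow> bool" where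
  "unit_vec_in n \<psi> \<longleftrightarrow> dim_vec \<psi> = n \<and> (\<Sum>p<n. (cmod (\<psi> $ p))\<^sup>2) = 1"

definition lin_indep_family :: "nat \<Rightarrow> nat \<Rightarrow> (nat \<Rightarrow> complex vec) \<Rightarrow> bool" where
  "lin_indep_family n K v \<longleftrightarrow>
     (\<forall>c :: nat \<Rightarrow> complex. (\<forall>p<n. (\<Sum>j<K. c j * v j $ p) = 0) \<longrightarrow> (\<forall>j<K. c j = 0))"

definition unamb_dist :: "nat \<Rightarrow> complex mat list \<Rightarrow> bool" where
  "unamb_dist d Ws \<longleftrightarrow>
     (\<exists>(m::nat) \<psi>. unit_vec_in (d * m) \<psi> \<and>
        lin_indep_family (d * m) (length Ws) (\<lambda>j. tensor_id_apply (Ws ! j) m \<psi>))"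

text \<open>Standard oracle U_f on H_M (x) H_N = C^(M*N), |x>(x)|y> has index x*N + y.\<close>
definition std_oracle :: "nat \<Rightarrow> nat \<Rightarrow> (nat \<Rightarrow> nat) \<Rightarrow> complex mat" where
  "std_oracle M N f = mat (M * N) (M * N)
     (\<lambda>(r, c). if r = (c div N) * N + (c mod N + f (c div N)) mod N then 1 else 0)"

definition min_oracle :: "nat \<Rightarrow> (nat \<Rightarrow> nat) \<Rightarrow> complex mat" where
  "min_oracle M f = mat M M (\<lambda>(r, c). if r = f c then 1 else 0)"

definition Gamma :: "nat \<Rightarrow> (nat \<Rightarrow> nat) list \<Rightarrow> int mat" where
  "Gamma M fs = mat (length fs) (length fs)
     (\<lambda>(j', j). int (card {x \<in> {0..<M}. (fs ! j') x = (fs ! j) x}))"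

end

theory Submission
  imports Defs "Jordan_Normal_Form.Char_Poly"
begin

(* Sending the maximally entangled state d^(-1/2) \<Sum>_k |k>|k> through W \<otimes> 1 yields
   d^(-1/2) times the matrix W read as a vector, while for any input state the output depends
   linearly on W. Hence W_0, ..., W_(K-1) are unambiguously distinguishable iff they are linearly
   independent as matrices. Every entry of U_f (and of Q_f) is either 0 or, uniformly in f, a
   value of the graph indicator \<chi>_f(x, y) = [f x = y], and every such value occurs; so the
   oracles are linearly independent iff the \<chi>_(f_j) are. Finally \<Gamma> is the Gram matrix of
   the \<chi>_(f_j): it is positive semidefinite, so det \<Gamma> \<ge> 0, with equality iff the \<chi>_(f_j)
   are linearly dependent. *)

lemma mult_add_less_mult: "r < a \<Longrightarrow> s < b \<Longrightarrow> r * b + s < a * (b::nat)"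
proof -
  assume "r < a" and "s < b"
  then have "r * b + s < (r + 1) * b" by simp
  also have "\<dots> \<le> a * b" using \<open>r < a\<close> by (intro mult_le_mono1) simp
  finally show ?thesis .
qed

lemma sum_lessThan_mult:
  fixes g :: "nat \<Rightarrow> 'a::comm_monoid_add"
  shows "(\<Sum>p<d * m. g p) = (\<Sum>k<d. \<Sum>a<m. g (k * m + a))"
proof -
  have "(\<Sum>p<d * m. g p) = (\<Sum>k<d. sum g {k * m..<k * m + m})"
    by (rule sum.nat_group[symmetric])
  also have "\<dots> = (\<Sum>k<d. \<Sum>a<m. g (k * m + a))"
    using sum.shift_bounds_nat_ivl[of g 0 "_ * m" m]
    by (simp add: atLeast0LessThan add.commute)
  finally show ?thesis .
qed

lemma mod_add_eq_iff_eq_mod_diff: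
  fixes N r y a :: nat
  assumes "y < N" and "a < N"
  shows "r mod N = (y + a) mod N \<longleftrightarrow> a = (r + N - y) mod N"
proof
  assume "r mod N = (y + a) mod N"
  then have "(r + N - y) mod N = ((y + a) mod N + (N - y)) mod N"
    using assms(1) by (metis add_diff_assoc less_imp_le mod_add_left_eq)
  also have "\<dots> = (y + a + (N - y)) mod N" by (rule mod_add_left_eq)
  also have "\<dots> = a" using assms by simp
  finally show "a = (r + N - y) mod N" by simp
next
  assume "a = (r + N - y) mod N"
  then have "(y + a) mod N = (y + (r + N - y)) mod N" by (simp add: mod_add_right_eq)
  also have "\<dots> = r mod N" using assms(1) by simp
  finally show "r mod N = (y + a) mod N" by simp
qed

lemma det_eq_prod_list_if_char_poly_factorized:
  fixes A :: "'a::field mat"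
  assumes A: "A \<in> carrier_mat n n" and cp: "char_poly A = (\<Prod>a\<leftarrow>as. [:- a, 1:])"
    and len: "length as = n"
  shows "det A = prod_list as"
proof -
  have "- char_matrix A 0 = (-1) \<cdot>\<^sub>m A"
    using A by (intro eq_matI) (auto simp: char_matrix_def)
  then have "(-1) ^ n * det A = det (- char_matrix A 0)"
    using A by simp
  also have "\<dots> = poly (char_poly A) 0" by (rule char_poly_matrix[OF A, symmetric])
  also have "\<dots> = (-1) ^ n * prod_list as"
    unfolding cp poly_prod_list using len by (induction as arbitrary: n) auto
  finally show ?thesis by simp
qed

lemma det_nonneg_if_eigenvalues_nonneg:
  fixes A :: "complex mat"
  assumes A: "A \<in> carrier_mat n n"
    and eigen: "\<And>a. eigenvalue A a \<Longrightarrow> Im a = 0 \<and> 0 \<le> Re a"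
  shows "Im (det A) = 0 \<and> 0 \<le> Re (det A)"
proof -
  obtain as where cp: "char_poly A = (\<Prod>a\<leftarrow>as. [:- a, 1:])" and "length as = n"
    using char_poly_factorized[OF A] by blast
  then have "det A = prod_list as" using A by (intro det_eq_prod_list_if_char_poly_factorized)
  moreover have "\<forall>a\<in>set as. Im a = 0 \<and> 0 \<le> Re a"
    using eigen eigenvalue_root_char_poly[OF A] linear_poly_root cp by metis
  then have "Im (prod_list as) = 0 \<and> 0 \<le> Re (prod_list as)"
    by (induction as) auto
  ultimately show ?thesis by simp
qed

definition lin_indep_on :: "'i set \<Rightarrow> nat \<Rightarrow> (nat \<Rightarrow> 'i \<Rightarrow> complex) \<Rightarrow> bool" where
  "lin_indep_on I K v \<longleftrightarrow> (\<forall>c. (\<forall>p\<in>I. (\<Sum>j<K. c j * v j p) = 0) \<longrightarrow> (\<forall>j<K. c j = 0))"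

lemma lin_indep_on_reindex:
  assumes "\<forall>i\<in>I. (\<exists>p\<in>P. \<forall>j<K. w j i = v j p) \<or> (\<forall>j<K. w j i = 0)"
    and "\<forall>p\<in>P. \<exists>i\<in>I. \<forall>j<K. w j i = v j p"
  shows "lin_indep_on I K w \<longleftrightarrow> lin_indep_on P K v"
proof -
  have "(\<forall>i\<in>I. (\<Sum>j<K. c j * w j i) = 0) \<longleftrightarrow> (\<forall>p\<in>P. (\<Sum>j<K. c j * v j p) = 0)" for c
  proof
    assume w0: "\<forall>i\<in>I. (\<Sum>j<K. c j * w j i) = 0"
    show "\<forall>p\<in>P. (\<Sum>j<K. c j * v j p) = 0"
    proof
      fix p assume "p \<in> P"
      then obtain i where "i \<in> I" and "\<forall>j<K. w j i = v j p" using assms(2) by blast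
      then have "(\<Sum>j<K. c j * v j p) = (\<Sum>j<K. c j * w j i)" by (intro sum.cong) auto
      then show "(\<Sum>j<K. c j * v j p) = 0" using w0 \<open>i \<in> I\<close> by simp
    qed
  next
    assume v0: "\<forall>p\<in>P. (\<Sum>j<K. c j * v j p) = 0"
    show "\<forall>i\<in>I. (\<Sum>j<K. c j * w j i) = 0"
    proof
      fix i assume "i \<in> I"
      with assms(1) consider p where "p \<in> P" "\<forall>j<K. w j i = v j p" | "\<forall>j<K. w j i = 0"
        by blast
      then show "(\<Sum>j<K. c j * w j i) = 0"
      proof cases
        case (1 p)
        then have "(\<Sum>j<K. c j * w j i) = (\<Sum>j<K. c j * v j p)" by (intro sum.cong) auto
        then show ?thesis using v0 \<open>p \<in> P\<close> by simp
      qed (simp add: sum.neutral)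
    qed
  qed
  then show ?thesis unfolding lin_indep_on_def by simp
qed

definition gram_mat :: "nat \<Rightarrow> 'i set \<Rightarrow> (nat \<Rightarrow> 'i \<Rightarrow> complex) \<Rightarrow> complex mat" where
  "gram_mat K I v = mat K K (\<lambda>(i, j). \<Sum>p\<in>I. cnj (v i p) * v j p)"

lemma dim_gram_mat [simp]:
  "dim_row (gram_mat K I v) = K" "dim_col (gram_mat K I v) = K"
  by (simp_all add: gram_mat_def)

lemma gram_mat_carrier: "gram_mat K I v \<in> carrier_mat K K"
  by (simp add: carrier_matI)

lemma gram_mat_mult_vec:
  assumes "u \<in> carrier_vec K" and "i < K"
  shows "(gram_mat K I v *\<^sub>v u) $ i = (\<Sum>p\<in>I. cnj (v i p) * (\<Sum>j<K. u $ j * v j p))"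
proof -
  have "(gram_mat K I v *\<^sub>v u) $ i = (\<Sum>j<K. (\<Sum>p\<in>I. cnj (v i p) * v j p) * u $ j)"
    using assms by (simp add: gram_mat_def scalar_prod_def atLeast0LessThan)
  also have "\<dots> = (\<Sum>p\<in>I. cnj (v i p) * (\<Sum>j<K. u $ j * v j p))"
    by (simp add: sum_distrib_left sum_distrib_right mult_ac sum.swap[of _ I])
  finally show ?thesis .
qed

lemma gram_mat_quadratic_form:
  assumes "u \<in> carrier_vec K"
  shows "(\<Sum>i<K. cnj (u $ i) * (gram_mat K I v *\<^sub>v u) $ i)
    = of_real (\<Sum>p\<in>I. (cmod (\<Sum>j<K. u $ j * v j p))\<^sup>2)"
proof -
  have "(\<Sum>i<K. cnj (u $ i) * (gram_mat K I v *\<^sub>v u) $ i)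
      = (\<Sum>i<K. cnj (u $ i) * (\<Sum>p\<in>I. cnj (v i p) * (\<Sum>j<K. u $ j * v j p)))"
    by (intro sum.cong refl) (simp add: gram_mat_mult_vec[OF assms] del: index_mult_mat_vec)
  also have "\<dots> = (\<Sum>i<K. \<Sum>p\<in>I. cnj (u $ i * v i p) * (\<Sum>j<K. u $ j * v j p))"
    by (simp add: sum_distrib_left mult.assoc)
  also have "\<dots> = (\<Sum>p\<in>I. cnj (\<Sum>j<K. u $ j * v j p) * (\<Sum>j<K. u $ j * v j p))"
    by (subst sum.swap) (simp add: sum_distrib_right)
  also have "\<dots> = (\<Sum>p\<in>I. of_real ((cmod (\<Sum>j<K. u $ j * v j p))\<^sup>2))"
    by (intro sum.cong refl) (metis complex_norm_square mult.commute)
  finally show ?thesis by (simp only: of_real_sum)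
qed

lemma gram_mat_eigenvalue_nonneg:
  assumes "eigenvalue (gram_mat K I v) a"
  shows "Im a = 0 \<and> 0 \<le> Re a"
proof -
  obtain u where u: "u \<in> carrier_vec K" and u0: "u \<noteq> 0\<^sub>v K"
    and eigen: "gram_mat K I v *\<^sub>v u = a \<cdot>\<^sub>v u"
    using assms unfolding eigenvalue_def eigenvector_def by auto
  define Q where "Q = (\<Sum>p\<in>I. (cmod (\<Sum>j<K. u $ j * v j p))\<^sup>2)"
  define S where "S = (\<Sum>i<K. (cmod (u $ i))\<^sup>2)"
  obtain i where "i < K" and "u $ i \<noteq> 0"
    using u u0 by (metis carrier_vecD eq_vecI index_zero_vec)
  then have S: "S > 0" unfolding S_def by (intro sum_pos2[of _ i]) auto
  have "of_real Q = (\<Sum>i<K. cnj (u $ i) * (gram_mat K I v *\<^sub>v u) $ i)"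
    unfolding Q_def by (rule gram_mat_quadratic_form[OF u, symmetric])
  also have "\<dots> = (\<Sum>i<K. a * (cnj (u $ i) * u $ i))"
    using u by (simp add: eigen mult_ac)
  also have "\<dots> = a * of_real S"
    unfolding S_def of_real_sum sum_distrib_left
    by (intro sum.cong refl) (metis complex_norm_square mult.commute)
  finally have "a = of_real (Q / S)" using S by (simp add: field_simps)
  moreover have "Q \<ge> 0" unfolding Q_def by (intro sum_nonneg) auto
  ultimately show ?thesis using S by simp
qed

lemma det_gram_mat_nonneg: "Im (det (gram_mat K I v)) = 0 \<and> 0 \<le> Re (det (gram_mat K I v))"
  by (intro det_nonneg_if_eigenvalues_nonneg[OF gram_mat_carrier] gram_mat_eigenvalue_nonneg)

lemma det_gram_mat_eq_0_iff:
  assumes "finite I"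
  shows "det (gram_mat K I v) = 0 \<longleftrightarrow> \<not> lin_indep_on I K v"
proof
  assume "det (gram_mat K I v) = 0"
  then obtain u where u: "u \<in> carrier_vec K" and u0: "u \<noteq> 0\<^sub>v K"
    and ker: "gram_mat K I v *\<^sub>v u = 0\<^sub>v K"
    using det_0_iff_vec_prod_zero[OF gram_mat_carrier] by blast
  have "(\<Sum>i<K. cnj (u $ i) * (gram_mat K I v *\<^sub>v u) $ i) = 0"
    using ker by simp
  then have "complex_of_real (\<Sum>p\<in>I. (cmod (\<Sum>j<K. u $ j * v j p))\<^sup>2) = 0"
    by (simp only: gram_mat_quadratic_form[OF u])
  then have "(\<Sum>p\<in>I. (cmod (\<Sum>j<K. u $ j * v j p))\<^sup>2) = 0"
    by (simp only: of_real_eq_0_iff)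
  then have "\<forall>p\<in>I. (\<Sum>j<K. u $ j * v j p) = 0"
    using assms by (simp add: sum_nonneg_eq_0_iff)
  moreover obtain i where "i < K" and "u $ i \<noteq> 0"
    using u u0 by (metis carrier_vecD eq_vecI index_zero_vec)
  ultimately show "\<not> lin_indep_on I K v" unfolding lin_indep_on_def by blast
next
  assume "\<not> lin_indep_on I K v"
  then obtain c k where comb0: "\<forall>p\<in>I. (\<Sum>j<K. c j * v j p) = 0" and "k < K" "c k \<noteq> 0"
    unfolding lin_indep_on_def by blast
  have u: "vec K c \<in> carrier_vec K" by simp
  moreover have "vec K c \<noteq> 0\<^sub>v K"
    using \<open>k < K\<close> \<open>c k \<noteq> 0\<close> by (auto dest!: arg_cong[of _ _ "\<lambda>w. w $ k"])
  moreover have "(gram_mat K I v *\<^sub>v vec K c) $ i = 0" if "i < K" for i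
    using that comb0 by (simp add: gram_mat_mult_vec[OF u] del: index_mult_mat_vec)
  then have "gram_mat K I v *\<^sub>v vec K c = 0\<^sub>v K" by (intro eq_vecI) simp_all
  ultimately show "det (gram_mat K I v) = 0"
    using det_0_iff_vec_prod_zero[OF gram_mat_carrier] by blast
qed

lemma lin_indep_entries_if_lin_indep_tensor_id_apply:
  assumes W: "\<forall>j<K. W j \<in> carrier_mat d d"
    and indep: "lin_indep_family (d * m) K (\<lambda>j. tensor_id_apply (W j) m \<psi>)"
  shows "lin_indep_on ({..<d} \<times> {..<d}) K (\<lambda>j (r, s). W j $$ (r, s))"
  unfolding lin_indep_on_def
proof (rule allI, rule impI)
  fix c assume "\<forall>p\<in>{..<d} \<times> {..<d}. (\<Sum>j<K. c j * (case p of (r, s) \<Rightarrow> W j $$ (r, s))) = 0"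
  then have comb0: "(\<Sum>j<K. c j * W j $$ (r, s)) = 0" if "r < d" "s < d" for r s
    using that by auto
  have "(\<Sum>j<K. c j * tensor_id_apply (W j) m \<psi> $ p) = 0" if p: "p < d * m" for p
  proof -
    have "p div m < d" using p by (simp add: less_mult_imp_div_less)
    have "(\<Sum>j<K. c j * tensor_id_apply (W j) m \<psi> $ p)
        = (\<Sum>j<K. c j * (\<Sum>k<d. W j $$ (p div m, k) * \<psi> $ (k * m + p mod m)))"
      using W p by (intro sum.cong refl) (auto simp: tensor_id_apply_def)
    also have "\<dots> = (\<Sum>k<d. (\<Sum>j<K. c j * W j $$ (p div m, k)) * \<psi> $ (k * m + p mod m))"
      by (simp add: sum_distrib_left sum_distrib_right mult.assoc sum.swap[of _ "{..<d}"])
    also have "\<dots> = 0" using comb0 \<open>p div m < d\<close> by simp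
    finally show ?thesis .
  qed
  then show "\<forall>j<K. c j = 0" using indep unfolding lin_indep_family_def by blast
qed

definition max_entangled :: "nat \<Rightarrow> complex vec" where
  "max_entangled d = vec (d * d) (\<lambda>q. if q div d = q mod d then of_real (1 / sqrt d) else 0)"

lemma max_entangled_nth:
  assumes "k < d" and "a < d"
  shows "max_entangled d $ (k * d + a) = (if k = a then of_real (1 / sqrt d) else 0)"
  using assms mult_add_less_mult[OF assms] by (simp add: max_entangled_def)

lemma unit_vec_in_max_entangled:
  assumes "d \<ge> 1"
  shows "unit_vec_in (d * d) (max_entangled d)"
proof -
  have "(\<Sum>p<d * d. (cmod (max_entangled d $ p))\<^sup>2)
      = (\<Sum>k<d. \<Sum>a<d. (cmod (max_entangled d $ (k * d + a)))\<^sup>2)"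
    by (rule sum_lessThan_mult)
  also have "\<dots> = (\<Sum>k<d. \<Sum>a<d. if k = a then 1 / real d else 0)"
    using assms by (intro sum.cong refl) (simp add: max_entangled_nth norm_divide power_divide)
  also have "\<dots> = 1" using assms by simp
  finally show ?thesis unfolding unit_vec_in_def by (simp add: max_entangled_def)
qed

lemma tensor_id_apply_max_entangled:
  assumes "W \<in> carrier_mat d d" and "r < d" and "s < d"
  shows "tensor_id_apply W d (max_entangled d) $ (r * d + s) = of_real (1 / sqrt d) * W $$ (r, s)"
proof -
  have "tensor_id_apply W d (max_entangled d) $ (r * d + s)
      = (\<Sum>k<d. W $$ (r, k) * max_entangled d $ (k * d + s))"
    using assms mult_add_less_mult[OF assms(2,3)] by (simp add: tensor_id_apply_def)
  also have "\<dots> = (\<Sum>k<d. if k = s then W $$ (r, k) * of_real (1 / sqrt d) else 0)"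
    using assms(3) by (intro sum.cong refl) (simp add: max_entangled_nth)
  finally show ?thesis using assms(3) by simp
qed

lemma unamb_dist_iff_lin_indep_entries:
  assumes d: "d \<ge> 1" and Ws: "\<forall>j<length Ws. Ws ! j \<in> carrier_mat d d"
  shows "unamb_dist d Ws \<longleftrightarrow> lin_indep_on ({..<d} \<times> {..<d}) (length Ws) (\<lambda>j (r, s). Ws ! j $$ (r, s))"
proof
  assume "unamb_dist d Ws"
  then show "lin_indep_on ({..<d} \<times> {..<d}) (length Ws) (\<lambda>j (r, s). Ws ! j $$ (r, s))"
    using lin_indep_entries_if_lin_indep_tensor_id_apply[OF Ws] unfolding unamb_dist_def by blast
next
  assume indep: "lin_indep_on ({..<d} \<times> {..<d}) (length Ws) (\<lambda>j (r, s). Ws ! j $$ (r, s))"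
  let ?\<Phi> = "max_entangled d"
  have "lin_indep_family (d * d) (length Ws) (\<lambda>j. tensor_id_apply (Ws ! j) d ?\<Phi>)"
    unfolding lin_indep_family_def
  proof (rule allI, rule impI)
    fix c assume comb0: "\<forall>p<d * d. (\<Sum>j<length Ws. c j * tensor_id_apply (Ws ! j) d ?\<Phi> $ p) = 0"
    have "(\<Sum>j<length Ws. c j * Ws ! j $$ (r, s)) = 0" if "r < d" "s < d" for r s
    proof -
      have "0 = (\<Sum>j<length Ws. c j * tensor_id_apply (Ws ! j) d ?\<Phi> $ (r * d + s))"
        using comb0 mult_add_less_mult[OF that] by simp
      also have "\<dots> = (\<Sum>j<length Ws. c j * (of_real (1 / sqrt d) * Ws ! j $$ (r, s)))"
        using that Ws by (simp add: tensor_id_apply_max_entangled)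
      also have "\<dots> = of_real (1 / sqrt d) * (\<Sum>j<length Ws. c j * Ws ! j $$ (r, s))"
        by (simp add: sum_distrib_left mult.left_commute)
      finally show ?thesis using d by simp
    qed
    then show "\<forall>j<length Ws. c j = 0" using indep unfolding lin_indep_on_def by auto
  qed
  then show "unamb_dist d Ws"
    using unit_vec_in_max_entangled[OF d] unfolding unamb_dist_def by blast
qed

definition graph_indicators :: "(nat \<Rightarrow> nat) list \<Rightarrow> nat \<Rightarrow> nat \<times> nat \<Rightarrow> complex" where
  "graph_indicators fs j = (\<lambda>(x, y). if (fs ! j) x = y then 1 else 0)"

lemma cnj_graph_indicators [simp]: "cnj (graph_indicators fs j p) = graph_indicators fs j p"
  by (simp add: graph_indicators_def split: prod.split)

lemma std_oracle_carrier [simp]: "std_oracle M N f \<in> carrier_mat (M * N) (M * N)"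
  by (simp add: std_oracle_def)

lemma min_oracle_carrier [simp]: "min_oracle M f \<in> carrier_mat M M"
  by (simp add: min_oracle_def)

lemma std_oracle_entry:
  assumes "r < M * N" and "s < M * N" and "f (s div N) < N"
  shows "std_oracle M N f $$ (r, s) =
    (if r div N = s div N \<and> f (s div N) = (r + N - s mod N) mod N then 1 else 0)"
proof -
  have N: "N > 0" using assms(2) by (cases N) auto
  have "r = s div N * N + (s mod N + f (s div N)) mod N
      \<longleftrightarrow> r div N = s div N \<and> r mod N = (s mod N + f (s div N)) mod N"
    using N by auto (metis div_mult_mod_eq)
  also have "\<dots> \<longleftrightarrow> r div N = s div N \<and> f (s div N) = (r + N - s mod N) mod N"
    using N assms(3) by (simp add: mod_add_eq_iff_eq_mod_diff)
  finally show ?thesis using assms(1,2) by (simp add: std_oracle_def)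
qed

lemma lin_indep_std_oracle_entries_iff:
  assumes range: "\<forall>j<length fs. \<forall>x<M. (fs ! j) x < N"
  shows "lin_indep_on ({..<M * N} \<times> {..<M * N}) (length fs)
      (\<lambda>j (r, s). map (std_oracle M N) fs ! j $$ (r, s))
    \<longleftrightarrow> lin_indep_on ({..<M} \<times> {..<N}) (length fs) (graph_indicators fs)"
proof (rule lin_indep_on_reindex; intro ballI)
  fix i assume "i \<in> {..<M * N} \<times> {..<M * N}"
  then obtain r s where i: "i = (r, s)" and r: "r < M * N" and s: "s < M * N" by blast
  have N: "N > 0" using s by (cases N) auto
  have x: "s div N < M" using s by (simp add: less_mult_imp_div_less)
  let ?p = "(s div N, (r + N - s mod N) mod N)"
  have entry: "map (std_oracle M N) fs ! j $$ (r, s) =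
      (if r div N = s div N then graph_indicators fs j ?p else 0)" if "j < length fs" for j
    using that range x r s by (simp add: std_oracle_entry graph_indicators_def)
  have "?p \<in> {..<M} \<times> {..<N}" using x N by simp
  then show "(\<exists>p\<in>{..<M} \<times> {..<N}. \<forall>j<length fs.
      (case i of (r, s) \<Rightarrow> map (std_oracle M N) fs ! j $$ (r, s)) = graph_indicators fs j p) \<or>
    (\<forall>j<length fs. (case i of (r, s) \<Rightarrow> map (std_oracle M N) fs ! j $$ (r, s)) = 0)"
    using i entry by (cases "r div N = s div N") auto
next
  fix p assume "p \<in> {..<M} \<times> {..<N}"
  then obtain x y where p: "p = (x, y)" and x: "x < M" and y: "y < N" by blast
  have xy: "x * N + y < M * N" and x0: "x * N + 0 < M * N"
    using mult_add_less_mult x y by auto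
  have "map (std_oracle M N) fs ! j $$ (x * N + y, x * N) = graph_indicators fs j p"
    if "j < length fs" for j
    using that range x y xy x0 by (auto simp: std_oracle_def graph_indicators_def p)
  then show "\<exists>i\<in>{..<M * N} \<times> {..<M * N}. \<forall>j<length fs.
      (case i of (r, s) \<Rightarrow> map (std_oracle M N) fs ! j $$ (r, s)) = graph_indicators fs j p"
    using xy x0 by (intro bexI[of _ "(x * N + y, x * N)"]) auto
qed

lemma lin_indep_min_oracle_entries_iff:
  "lin_indep_on ({..<M} \<times> {..<M}) (length fs) (\<lambda>j (r, s). map (min_oracle M) fs ! j $$ (r, s))
    \<longleftrightarrow> lin_indep_on ({..<M} \<times> {..<M}) (length fs) (graph_indicators fs)"
proof (rule lin_indep_on_reindex; intro ballI)
  fix i :: "nat \<times> nat" assume "i \<in> {..<M} \<times> {..<M}"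
  then show "(\<exists>p\<in>{..<M} \<times> {..<M}. \<forall>j<length fs.
      (case i of (r, s) \<Rightarrow> map (min_oracle M) fs ! j $$ (r, s)) = graph_indicators fs j p) \<or>
    (\<forall>j<length fs. (case i of (r, s) \<Rightarrow> map (min_oracle M) fs ! j $$ (r, s)) = 0)"
    by (intro disjI1 bexI[of _ "prod.swap i"]) (auto simp: min_oracle_def graph_indicators_def)
next
  fix p :: "nat \<times> nat" assume "p \<in> {..<M} \<times> {..<M}"
  then show "\<exists>i\<in>{..<M} \<times> {..<M}. \<forall>j<length fs.
      (case i of (r, s) \<Rightarrow> map (min_oracle M) fs ! j $$ (r, s)) = graph_indicators fs j p"
    by (intro bexI[of _ "prod.swap p"]) (auto simp: min_oracle_def graph_indicators_def)
qed

lemma Gamma_eq_gram_mat: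
  assumes range: "\<forall>j<length fs. \<forall>x<M. (fs ! j) x < N"
  shows "map_mat of_int (Gamma M fs)
    = gram_mat (length fs) ({..<M} \<times> {..<N}) (graph_indicators fs)"
proof (rule eq_matI)
  fix i j assume "i < dim_row (gram_mat (length fs) ({..<M} \<times> {..<N}) (graph_indicators fs))"
    and "j < dim_col (gram_mat (length fs) ({..<M} \<times> {..<N}) (graph_indicators fs))"
  then have i: "i < length fs" and j: "j < length fs" by (simp_all add: gram_mat_def)
  have "(\<Sum>p\<in>{..<M} \<times> {..<N}. cnj (graph_indicators fs i p) * graph_indicators fs j p)
      = (\<Sum>x<M. \<Sum>y<N. graph_indicators fs i (x, y) * graph_indicators fs j (x, y))"
    by (simp add: sum.cartesian_product split_def)
  also have "\<dots> = (\<Sum>x<M. \<Sum>y<N. if (fs ! i) x = y then if (fs ! j) x = y then 1 else 0 else 0)"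
    by (intro sum.cong refl) (simp add: graph_indicators_def)
  also have "\<dots> = (\<Sum>x<M. if (fs ! i) x = (fs ! j) x then 1 else 0)"
    using range i by (intro sum.cong refl) auto
  also have "\<dots> = of_nat (card {x \<in> {0..<M}. (fs ! i) x = (fs ! j) x})"
    by (simp add: sum.If_cases atLeast0LessThan Int_def)
  finally show "map_mat of_int (Gamma M fs) $$ (i, j)
      = gram_mat (length fs) ({..<M} \<times> {..<N}) (graph_indicators fs) $$ (i, j)"
    using i j by (simp add: Gamma_def gram_mat_def)
qed (simp_all add: Gamma_def gram_mat_def)

lemma det_Gamma_pos_iff:
  assumes range: "\<forall>j<length fs. \<forall>x<M. (fs ! j) x < N"
  shows "0 < det (Gamma M fs)
    \<longleftrightarrow> lin_indep_on ({..<M} \<times> {..<N}) (length fs) (graph_indicators fs)"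
proof -
  have det: "det (gram_mat (length fs) ({..<M} \<times> {..<N}) (graph_indicators fs))
      = of_int (det (Gamma M fs))"
    using Gamma_eq_gram_mat[OF range] of_int_hom.hom_det by metis
  have "0 \<le> det (Gamma M fs)"
    using det_gram_mat_nonneg[of "length fs" "{..<M} \<times> {..<N}" "graph_indicators fs"]
    unfolding det by simp
  moreover have "det (Gamma M fs) = 0
      \<longleftrightarrow> \<not> lin_indep_on ({..<M} \<times> {..<N}) (length fs) (graph_indicators fs)"
    using det_gram_mat_eq_0_iff[of "{..<M} \<times> {..<N}" "length fs" "graph_indicators fs"]
    unfolding det by simp
  ultimately show ?thesis by linarith
qed

theorem theorem3:
  fixes M N :: nat and fs :: "(nat \<Rightarrow> nat) list"
  assumes "M \<ge> 1" and "N \<ge> 1"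
    and "\<forall>j < length fs. \<forall>x < M. (fs ! j) x < N"
    and "\<forall>i < length fs. \<forall>j < length fs. i \<noteq> j \<longrightarrow> (\<exists>x < M. (fs ! i) x \<noteq> (fs ! j) x)"
  shows "(unamb_dist (M * N) (map (std_oracle M N) fs) \<longleftrightarrow> det (Gamma M fs) > 0)
    \<and> ((M = N \<and> (\<forall>j < length fs. bij_betw (fs ! j) {0..<M} {0..<M})) \<longrightarrow>
         (unamb_dist M (map (min_oracle M) fs) \<longleftrightarrow> det (Gamma M fs) > 0))"
proof (intro conjI impI)
  have "unamb_dist (M * N) (map (std_oracle M N) fs) \<longleftrightarrow> lin_indep_on ({..<M * N} \<times> {..<M * N})
      (length fs) (\<lambda>j (r, s). map (std_oracle M N) fs ! j $$ (r, s))"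
    using assms(1,2) unamb_dist_iff_lin_indep_entries[of "M * N" "map (std_oracle M N) fs"]
    by simp
  also have "\<dots> \<longleftrightarrow> lin_indep_on ({..<M} \<times> {..<N}) (length fs) (graph_indicators fs)"
    using assms(3) by (rule lin_indep_std_oracle_entries_iff)
  also have "\<dots> \<longleftrightarrow> det (Gamma M fs) > 0"
    using assms(3) by (rule det_Gamma_pos_iff[symmetric])
  finally show "unamb_dist (M * N) (map (std_oracle M N) fs) \<longleftrightarrow> det (Gamma M fs) > 0" .
next
  assume "M = N \<and> (\<forall>j < length fs. bij_betw (fs ! j) {0..<M} {0..<M})"
  then have range: "\<forall>j<length fs. \<forall>x<M. (fs ! j) x < M"
    by (fastforce simp: bij_betw_def)
  have "unamb_dist M (map (min_oracle M) fs) \<longleftrightarrow> lin_indep_on ({..<M} \<times> {..<M})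
      (length fs) (\<lambda>j (r, s). map (min_oracle M) fs ! j $$ (r, s))"
    using assms(1) unamb_dist_iff_lin_indep_entries[of M "map (min_oracle M) fs"] by simp
  also have "\<dots> \<longleftrightarrow> lin_indep_on ({..<M} \<times> {..<M}) (length fs) (graph_indicators fs)"
    by (rule lin_indep_min_oracle_entries_iff)
  also have "\<dots> \<longleftrightarrow> det (Gamma M fs) > 0"
    using range by (rule det_Gamma_pos_iff[symmetric])
  finally show "unamb_dist M (map (min_oracle M) fs) \<longleftrightarrow> det (Gamma M fs) > 0" .
qed

end
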